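(* Let $F$ be a distribution function on $\mathbb{R}$ with finite second moment which is log-concave, in the sense that $\log F(x)$ is a concave function on $J=\{x\in\mathbb{R}:0<F(x)<1\}$, and which has no atom at its right end-point $\omega(F)=\inf\{x\in\mathbb{R}:F(x)=1\}$. Let $X_1,X_2,\dots$ be i.i.d. with distribution function $F$, $X_{k:k}=\max\{X_1,\dots,X_k\}$, and $Z_i=X_{i+1:i+1}-X_{i:i}$ for $i\ge1$. Then $\operatorname{Cov}[Z_i,Z_j]\le 0$ for all $n\ge2$ and all $i\neq j$ with $i,j\in\{1,\dots,n-1\}$; that is, $F$ belongs to the class NCP.
   Context: The class NCP consists of the distribution functions $F$ with finite second moment whose partial maxima spacings $Z_i=X_{i+1:i+1}-X_{i:i}$ (for an i.i.d. sequence from $F$) satisfy $\operatorname{Cov}[Z_i,Z_j]\le0$ for all $i\ne j$, $i,j=1,\dots,n-1$, for every $n\ge2$. *)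

theory Defs
  imports "HOL-Probability.Probability"
begin

definition pmax :: "(nat \<Rightarrow> 'a \<Rightarrow> real) \<Rightarrow> nat \<Rightarrow> 'a \<Rightarrow> real" where
  "pmax X k = (\<lambda>w. Max ((\<lambda>j. X j w) ` {1..k}))"

definition pspacing :: "(nat \<Rightarrow> 'a \<Rightarrow> real) \<Rightarrow> nat \<Rightarrow> 'a \<Rightarrow> real" where
  "pspacing X i = (\<lambda>w. pmax X (Suc i) w - pmax X i w)"

definition covariance :: "'a measure \<Rightarrow> ('a \<Rightarrow> real) \<Rightarrow> ('a \<Rightarrow> real) \<Rightarrow> real" where
  "covariance M U V =
     (\<integral>w. (U w - (\<integral>v. U v \<partial>M)) * (V w - (\<integral>v. V v \<partial>M)) \<partial>M)"

text \<open>Right end-point omega(F) = inf {x. F x = 1}, when finite.\<close>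
definition right_endpoint :: "(real \<Rightarrow> real) \<Rightarrow> real" where
  "right_endpoint F = Inf {x. F x = 1}"

end

theory Submission
  imports Defs
begin

(* Represent Z_k as the Lebesgue measure of [X_{k:k}, X_{k+1}). Fubini and independence give
   E Z_i = \<integral> F^i (1 - F) and, for i < j,
   E [Z_i Z_j] = \<integral> F(t)^(j-i-1) (1 - F(t)) \<integral>_{s<t} F(s)^i (F(t) - F(s)) ds dt,
   so Cov [Z_i, Z_j] \<le> 0 follows from  \<integral>_{s<t} F(s)^i (F(t) - F(s)) ds \<le> F(t)^(i+1) E Z_i.
   With c = F(t) this reads \<integral> h(F/c) \<le> \<integral> h(F) for h(v) = v^i (1 - v)^+, and writing h as a
   superposition of indicators of [x, y) reduces it to \<lambda>{cx \<le> F < cy} \<le> \<lambda>{x \<le> F < y}.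
   Log-concavity makes F(s + d) / F(s) nonincreasing in s, so translating the first level set by the
   d with F(s\<^sub>1 + d) = F(s\<^sub>1) / c, for s\<^sub>1 near its left end, maps it into the second. *)

section \<open>Covariance\<close>

lemma covariance_commute: "covariance M U V = covariance M V U"
  unfolding covariance_def by (simp add: mult.commute)

lemma (in prob_space) covariance_eq_expectation:
  assumes "integrable M U" "integrable M V" "integrable M (\<lambda>w. U w * V w)"
  shows "covariance M U V = expectation (\<lambda>w. U w * V w) - expectation U * expectation V"
proof -
  have "covariance M U V
      = expectation (\<lambda>w. U w * V w - expectation U * V w - expectation V * U w + expectation U * expectation V)"
    unfolding covariance_def by (intro Bochner_Integration.integral_cong) (simp_all add: algebra_simps)
  also have "\<dots> = expectation (\<lambda>w. U w * V w) - expectation U * expectation V"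
    using assms by (simp add: prob_space)
  finally show ?thesis .
qed

lemma (in prob_space) covariance_nonpos:
  assumes U: "integrable M U" "\<And>w. 0 \<le> U w" and V: "integrable M V" "\<And>w. 0 \<le> V w"
    and le: "(\<integral>\<^sup>+w. ennreal (U w) * ennreal (V w) \<partial>M)
      \<le> (\<integral>\<^sup>+w. ennreal (U w) \<partial>M) * (\<integral>\<^sup>+w. ennreal (V w) \<partial>M)"
  shows "covariance M U V \<le> 0"
proof -
  have "0 \<le> expectation U" "0 \<le> expectation V"
    using U V by (simp_all add: integral_nonneg_AE)
  have "(\<integral>\<^sup>+w. ennreal (U w) \<partial>M) = ennreal (expectation U)"
    "(\<integral>\<^sup>+w. ennreal (V w) \<partial>M) = ennreal (expectation V)"
    using U V by (simp_all add: nn_integral_eq_integral)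
  with le U V have le': "(\<integral>\<^sup>+w. ennreal (U w * V w) \<partial>M) \<le> ennreal (expectation U * expectation V)"
    using \<open>0 \<le> expectation U\<close> \<open>0 \<le> expectation V\<close> by (simp add: ennreal_mult)
  have "(\<lambda>w. U w * V w) \<in> borel_measurable M"
    using U V by measurable
  then have UV: "integrable M (\<lambda>w. U w * V w)"
    using le' U V by (intro integrableI_nonneg) (auto simp: top_unique ennreal_less_top intro: le_less_trans)
  then have "ennreal (expectation (\<lambda>w. U w * V w)) \<le> ennreal (expectation U * expectation V)"
    using le' U V by (simp add: nn_integral_eq_integral)
  then have "expectation (\<lambda>w. U w * V w) \<le> expectation U * expectation V"
    using \<open>0 \<le> expectation U\<close> \<open>0 \<le> expectation V\<close> by (simp add: ennreal_le_iff)
  then show ?thesis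
    using covariance_eq_expectation[OF U(1) V(1) UV] by simp
qed

section \<open>Partial maxima and their spacings\<close>

lemma prod_atLeastAtMost_Suc_split:
  fixes g :: "nat \<Rightarrow> 'b::comm_monoid_mult"
  assumes "1 \<le> i" "i < j"
  shows "(\<Prod>k\<in>{1..Suc j}. g k) = (\<Prod>k\<in>{1..i}. g k) * g (Suc i) * (\<Prod>k\<in>{Suc (Suc i)..j}. g k) * g (Suc j)"
proof -
  have "(\<Prod>k\<in>{1..Suc j}. g k) = g (Suc j) * (\<Prod>k\<in>{1..j}. g k)"
    using assms by (subst prod.nat_ivl_Suc') auto
  also have "(\<Prod>k\<in>{1..j}. g k) = (\<Prod>k\<in>{1..i}. g k) * (\<Prod>k\<in>{Suc i..j}. g k)"
    using prod.ub_add_nat[of 1 i g "j - i"] assms by simp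
  also have "(\<Prod>k\<in>{Suc i..j}. g k) = g (Suc i) * (\<Prod>k\<in>{Suc (Suc i)..j}. g k)"
    using assms by (intro prod.atLeast_Suc_atMost) auto
  finally show ?thesis by (simp add: ac_simps)
qed

lemma pmax_le_iff: "1 \<le> k \<Longrightarrow> pmax X k w \<le> s \<longleftrightarrow> (\<forall>j\<in>{1..k}. X j w \<le> s)"
  unfolding pmax_def by (subst Max_le_iff) auto

lemma le_pmax: "j \<in> {1..k} \<Longrightarrow> X j w \<le> pmax X k w"
  unfolding pmax_def by (rule Max_ge) auto

lemma pmax_Suc: "1 \<le> k \<Longrightarrow> pmax X (Suc k) w = max (pmax X k w) (X (Suc k) w)"
proof -
  assume "1 \<le> k"
  have "{1..Suc k} = insert (Suc k) {1..k}" by auto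
  with \<open>1 \<le> k\<close> show ?thesis
    unfolding pmax_def by (simp add: max.commute)
qed

lemma pspacing_eq_max: "1 \<le> k \<Longrightarrow> pspacing X k w = max 0 (X (Suc k) w - pmax X k w)"
  unfolding pspacing_def by (simp add: pmax_Suc max_def)

lemma pspacing_nonneg: "1 \<le> k \<Longrightarrow> 0 \<le> pspacing X k w"
  by (simp add: pspacing_eq_max)

definition spacing_indicator :: "(nat \<Rightarrow> 'a \<Rightarrow> real) \<Rightarrow> nat \<Rightarrow> 'a \<Rightarrow> real \<Rightarrow> ennreal" where
  "spacing_indicator X k w s = (if pmax X k w \<le> s \<and> s < X (Suc k) w then 1 else 0)"

lemma borel_measurable_spacing_indicator_fixed[measurable]:
  assumes [measurable]: "g \<in> borel_measurable N"
  shows "(\<lambda>x. spacing_indicator X k w (g x)) \<in> borel_measurable N"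
  unfolding spacing_indicator_def by measurable

lemma pspacing_eq_nn_integral:
  assumes "1 \<le> k"
  shows "ennreal (pspacing X k w) = (\<integral>\<^sup>+s. spacing_indicator X k w s \<partial>lborel)"
proof -
  have "spacing_indicator X k w = indicator {pmax X k w..<X (Suc k) w}"
    by (auto simp: spacing_indicator_def indicator_def)
  then have "(\<integral>\<^sup>+s. spacing_indicator X k w s \<partial>lborel) = emeasure lborel {pmax X k w..<X (Suc k) w}"
    by simp
  then show ?thesis
    using assms by (cases "pmax X k w \<le> X (Suc k) w") (auto simp: pspacing_eq_max)
qed

lemma pspacing_mult_eq_nn_integral:
  assumes "1 \<le> i" "1 \<le> j"
  shows "ennreal (pspacing X i w) * ennreal (pspacing X j w)
    = (\<integral>\<^sup>+t. \<integral>\<^sup>+s. spacing_indicator X i w s * spacing_indicator X j w t \<partial>lborel \<partial>lborel)"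
proof -
  have "ennreal (pspacing X i w) * ennreal (pspacing X j w)
      = (\<integral>\<^sup>+t. (\<integral>\<^sup>+s. spacing_indicator X i w s \<partial>lborel) * spacing_indicator X j w t \<partial>lborel)"
    using assms by (simp add: pspacing_eq_nn_integral nn_integral_cmult)
  also have "\<dots> = (\<integral>\<^sup>+t. \<integral>\<^sup>+s. spacing_indicator X i w s * spacing_indicator X j w t \<partial>lborel \<partial>lborel)"
    by (intro nn_integral_cong nn_integral_multc[symmetric]) measurable
  finally show ?thesis .
qed

lemma spacing_event_iff:
  assumes "1 \<le> k"
  shows "(pmax X k w \<le> s \<and> s < X (Suc k) w)
    \<longleftrightarrow> (\<forall>l\<in>{1..Suc k}. X l w \<in> (if l \<le> k then {..s} else {s<..}))"
  using assms by (auto simp: pmax_le_iff le_Suc_eq)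

definition spacing_pair_sets :: "nat \<Rightarrow> nat \<Rightarrow> real \<Rightarrow> real \<Rightarrow> nat \<Rightarrow> real set" where
  "spacing_pair_sets i j s t k =
     (if k \<le> i then {..s} else if k = Suc i then {s<..t} else if k \<le> j then {..t} else {t<..})"

lemma spacing_pair_event_iff:
  assumes "1 \<le> i" "i < j"
  shows "(pmax X i w \<le> s \<and> s < X (Suc i) w \<and> pmax X j w \<le> t \<and> t < X (Suc j) w)
     \<longleftrightarrow> (\<forall>k\<in>{1..Suc j}. X k w \<in> spacing_pair_sets i j s t k)" (is "?L \<longleftrightarrow> ?R")
proof
  assume ?L
  then show ?R using assms by (auto simp: spacing_pair_sets_def pmax_le_iff le_Suc_eq)
next
  assume R: ?R
  then have X_in: "X k w \<in> spacing_pair_sets i j s t k" if "1 \<le> k" "k \<le> Suc j" for k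
    using that by auto
  have i: "s < X (Suc i) w" "X (Suc i) w \<le> t"
    using X_in[of "Suc i"] assms by (auto simp: spacing_pair_sets_def)
  have below_i: "X k w \<le> s" if "1 \<le> k" "k \<le> i" for k
    using X_in[of k] that assms by (simp add: spacing_pair_sets_def)
  have "X k w \<le> t" if "1 \<le> k" "k \<le> j" for k
    using X_in[of k] below_i[of k] that assms i by (auto simp: spacing_pair_sets_def split: if_splits)
  moreover have "t < X (Suc j) w"
    using X_in[of "Suc j"] assms by (simp add: spacing_pair_sets_def)
  ultimately show ?L
    using i below_i assms by (auto simp: pmax_le_iff)
qed

section \<open>Spacings of an i.i.d. sequence\<close>

locale iid_sequence = prob_space M + mu: real_distribution mu
  for M :: "'a measure" and mu :: "real measure" +
  fixes X :: "nat \<Rightarrow> 'a \<Rightarrow> real"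
  assumes indep_X: "indep_vars (\<lambda>_. borel) X {1..}"
    and distr_X: "\<And>i. 1 \<le> i \<Longrightarrow> distr M borel (X i) = mu"
begin

lemma measurable_X: "1 \<le> i \<Longrightarrow> X i \<in> borel_measurable M"
  using indep_X by (auto simp: indep_vars_def)

lemma borel_measurable_X_Suc[measurable]: "X (Suc i) \<in> borel_measurable M"
  by (rule measurable_X) simp

lemma borel_measurable_pmax[measurable]: "pmax X k \<in> borel_measurable M"
  unfolding pmax_def by (rule borel_measurable_Max) (auto intro: measurable_X)

lemma borel_measurable_pspacing[measurable]: "pspacing X k \<in> borel_measurable M"
  unfolding pspacing_def by measurable

lemma borel_measurable_spacing_indicator[measurable]:
  assumes [measurable]: "f \<in> measurable N M" "g \<in> borel_measurable N"
  shows "(\<lambda>x. spacing_indicator X k (f x) (g x)) \<in> borel_measurable N"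
  unfolding spacing_indicator_def by measurable

lemma borel_measurable_cdf[measurable]: "cdf mu \<in> borel_measurable borel"
  by (intro borel_measurable_mono) (simp add: mono_def mu.cdf_nondecreasing)

lemma measure_greaterThan: "measure mu {t<..} = 1 - cdf mu t"
proof -
  have "space mu - {..t} = {t<..}" by auto
  then show ?thesis using mu.prob_compl[of "{..t}"] by (simp add: cdf_def)
qed

lemma integrable_X:
  assumes "1 \<le> k" "integrable mu (\<lambda>x. x)"
  shows "integrable M (X k)"
proof -
  have "integrable (distr M borel (X k)) (\<lambda>x. x)"
    using assms distr_X by simp
  then show ?thesis
    using measurable_X[OF assms(1)] by (subst (asm) integrable_distr_eq) auto
qed

lemma integrable_pspacing:
  assumes "1 \<le> k" "integrable mu (\<lambda>x. x)"
  shows "integrable M (pspacing X k)"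
proof (rule Bochner_Integration.integrable_bound)
  show "integrable M (\<lambda>w. \<bar>X (Suc k) w\<bar> + \<bar>X 1 w\<bar>)"
    using assms by (intro Bochner_Integration.integrable_add Bochner_Integration.integrable_abs integrable_X) auto
  have "pspacing X k w \<le> \<bar>X (Suc k) w\<bar> + \<bar>X 1 w\<bar>" for w
    using le_pmax[of 1 k X w] assms(1) unfolding pspacing_eq_max[OF assms(1)] by (auto simp: max_def abs_if)
  then show "AE w in M. norm (pspacing X k w) \<le> norm (\<bar>X (Suc k) w\<bar> + \<bar>X 1 w\<bar>)"
    using pspacing_nonneg[OF assms(1), of X] by (intro AE_I2) simp
qed measurable

lemma nn_integral_indicator_iid_event:
  assumes I: "finite I" "I \<noteq> {}" "I \<subseteq> {1..}" and A: "\<And>k. k \<in> I \<Longrightarrow> A k \<in> sets borel"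
    and P: "\<And>w. w \<in> space M \<Longrightarrow> P w \<longleftrightarrow> (\<forall>k\<in>I. X k w \<in> A k)"
  shows "(\<integral>\<^sup>+w. (if P w then 1 else 0) \<partial>M) = ennreal (\<Prod>k\<in>I. measure mu (A k))"
proof -
  let ?E = "\<Inter>k\<in>I. X k -` A k \<inter> space M"
  have "?E \<in> sets M"
    using I A measurable_X by (intro sets.finite_INT) auto
  have "(\<integral>\<^sup>+w. (if P w then 1 else 0) \<partial>M) = (\<integral>\<^sup>+w. indicator ?E w \<partial>M)"
    using P I by (intro nn_integral_cong) (auto simp: indicator_def)
  also have "\<dots> = ennreal (prob ?E)"
    using \<open>?E \<in> sets M\<close> by (simp add: emeasure_eq_measure)
  also have "prob ?E = (\<Prod>k\<in>I. prob (X k -` A k \<inter> space M))"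
    using A I by (intro indep_varsD[OF indep_X]) auto
  also have "\<dots> = (\<Prod>k\<in>I. measure mu (A k))"
  proof (rule prod.cong)
    fix k assume "k \<in> I"
    then have "1 \<le> k" "A k \<in> sets borel" using I A by auto
    then show "prob (X k -` A k \<inter> space M) = measure mu (A k)"
      using measurable_X[of k] by (simp add: measure_distr flip: distr_X)
  qed simp
  finally show ?thesis .
qed

lemma prod_measure_spacing_sets:
  "(\<Prod>l\<in>{1..Suc k}. measure mu (if l \<le> k then {..s} else {s<..})) = cdf mu s ^ k * (1 - cdf mu s)"
proof -
  have "(\<Prod>l\<in>{1..k}. measure mu (if l \<le> k then {..s} else {s<..})) = (\<Prod>l\<in>{1..k}. cdf mu s)"
    by (intro prod.cong) (auto simp: cdf_def)
  moreover have "(\<Prod>l\<in>{1..Suc k}. measure mu (if l \<le> k then {..s} else {s<..}))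
     = measure mu {s<..} * (\<Prod>l\<in>{1..k}. measure mu (if l \<le> k then {..s} else {s<..}))"
    by (subst prod.nat_ivl_Suc') auto
  ultimately show ?thesis by (simp add: measure_greaterThan mult.commute)
qed

lemma prod_measure_spacing_pair_sets:
  assumes "1 \<le> i" "i < j"
  shows "(\<Prod>k\<in>{1..Suc j}. measure mu (spacing_pair_sets i j s t k))
     = cdf mu s ^ i * (if s < t then cdf mu t - cdf mu s else 0) * (cdf mu t ^ (j - Suc i) * (1 - cdf mu t))"
proof -
  have "(\<Prod>k\<in>{1..Suc j}. measure mu (spacing_pair_sets i j s t k))
    = (\<Prod>k\<in>{1..i}. measure mu (spacing_pair_sets i j s t k)) * measure mu (spacing_pair_sets i j s t (Suc i))
      * (\<Prod>k\<in>{Suc (Suc i)..j}. measure mu (spacing_pair_sets i j s t k)) * measure mu (spacing_pair_sets i j s t (Suc j))"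
    by (rule prod_atLeastAtMost_Suc_split[OF assms])
  also have "(\<Prod>k\<in>{1..i}. measure mu (spacing_pair_sets i j s t k)) = (\<Prod>k\<in>{1..i}. cdf mu s)"
    by (intro prod.cong) (auto simp: spacing_pair_sets_def cdf_def)
  also have "(\<Prod>k\<in>{Suc (Suc i)..j}. measure mu (spacing_pair_sets i j s t k)) = (\<Prod>k\<in>{Suc (Suc i)..j}. cdf mu t)"
    by (intro prod.cong) (auto simp: spacing_pair_sets_def cdf_def)
  also have "measure mu (spacing_pair_sets i j s t (Suc i)) = (if s < t then cdf mu t - cdf mu s else 0)"
    by (auto simp: spacing_pair_sets_def mu.cdf_diff_eq)
  also have "measure mu (spacing_pair_sets i j s t (Suc j)) = 1 - cdf mu t"
    using assms by (simp add: spacing_pair_sets_def measure_greaterThan)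
  finally show ?thesis by simp
qed

lemma nn_integral_spacing_indicator:
  assumes "1 \<le> k"
  shows "(\<integral>\<^sup>+w. spacing_indicator X k w s \<partial>M) = ennreal (cdf mu s ^ k * (1 - cdf mu s))"
  unfolding spacing_indicator_def prod_measure_spacing_sets[symmetric]
proof (rule nn_integral_indicator_iid_event)
  fix w
  show "(pmax X k w \<le> s \<and> s < X (Suc k) w)
    \<longleftrightarrow> (\<forall>l\<in>{1..Suc k}. X l w \<in> (if l \<le> k then {..s} else {s<..}))"
    by (rule spacing_event_iff[OF assms])
qed auto

lemma nn_integral_spacing_indicator_mult:
  assumes "1 \<le> i" "i < j"
  shows "(\<integral>\<^sup>+w. spacing_indicator X i w s * spacing_indicator X j w t \<partial>M)
    = ennreal (cdf mu s ^ i * (if s < t then cdf mu t - cdf mu s else 0) * (cdf mu t ^ (j - Suc i) * (1 - cdf mu t)))"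
proof -
  have "(\<integral>\<^sup>+w. spacing_indicator X i w s * spacing_indicator X j w t \<partial>M)
    = (\<integral>\<^sup>+w. (if pmax X i w \<le> s \<and> s < X (Suc i) w \<and> pmax X j w \<le> t \<and> t < X (Suc j) w
                then 1 else 0) \<partial>M)"
    by (intro nn_integral_cong) (simp add: spacing_indicator_def)
  also have "\<dots> = ennreal (\<Prod>k\<in>{1..Suc j}. measure mu (spacing_pair_sets i j s t k))"
  proof (rule nn_integral_indicator_iid_event)
    fix w
    show "(pmax X i w \<le> s \<and> s < X (Suc i) w \<and> pmax X j w \<le> t \<and> t < X (Suc j) w)
       \<longleftrightarrow> (\<forall>k\<in>{1..Suc j}. X k w \<in> spacing_pair_sets i j s t k)"
      by (rule spacing_pair_event_iff[OF assms])
  qed (auto simp: spacing_pair_sets_def)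
  finally show ?thesis by (simp only: prod_measure_spacing_pair_sets[OF assms])
qed

interpretation M_lborel: pair_sigma_finite M lborel ..

lemma nn_integral_pspacing:
  assumes "1 \<le> k"
  shows "(\<integral>\<^sup>+w. ennreal (pspacing X k w) \<partial>M)
    = (\<integral>\<^sup>+s. ennreal (cdf mu s ^ k * (1 - cdf mu s)) \<partial>lborel)"
proof -
  have "(\<integral>\<^sup>+w. ennreal (pspacing X k w) \<partial>M) = (\<integral>\<^sup>+w. \<integral>\<^sup>+s. spacing_indicator X k w s \<partial>lborel \<partial>M)"
    using assms by (simp add: pspacing_eq_nn_integral)
  also have "\<dots> = (\<integral>\<^sup>+s. \<integral>\<^sup>+w. spacing_indicator X k w s \<partial>M \<partial>lborel)"
    by (rule M_lborel.Fubini'[symmetric]) measurable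
  finally show ?thesis by (simp add: nn_integral_spacing_indicator[OF assms])
qed

lemma nn_integral_pspacing_mult:
  assumes "1 \<le> i" "i < j"
  shows "(\<integral>\<^sup>+w. ennreal (pspacing X i w) * ennreal (pspacing X j w) \<partial>M)
    = (\<integral>\<^sup>+t. (\<integral>\<^sup>+s. ennreal (cdf mu s ^ i * (if s < t then cdf mu t - cdf mu s else 0)) \<partial>lborel)
              * ennreal (cdf mu t ^ (j - Suc i) * (1 - cdf mu t)) \<partial>lborel)"
proof -
  have "(\<integral>\<^sup>+w. ennreal (pspacing X i w) * ennreal (pspacing X j w) \<partial>M)
      = (\<integral>\<^sup>+w. \<integral>\<^sup>+t. \<integral>\<^sup>+s. spacing_indicator X i w s * spacing_indicator X j w t \<partial>lborel \<partial>lborel \<partial>M)"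
    using assms by (simp add: pspacing_mult_eq_nn_integral)
  also have "\<dots> = (\<integral>\<^sup>+t. \<integral>\<^sup>+w. \<integral>\<^sup>+s. spacing_indicator X i w s * spacing_indicator X j w t \<partial>lborel \<partial>M \<partial>lborel)"
    by (rule M_lborel.Fubini'[symmetric]) measurable
  also have "\<dots> = (\<integral>\<^sup>+t. \<integral>\<^sup>+s. \<integral>\<^sup>+w. spacing_indicator X i w s * spacing_indicator X j w t \<partial>M \<partial>lborel \<partial>lborel)"
    by (intro nn_integral_cong M_lborel.Fubini'[symmetric]) measurable
  also have "\<dots> = (\<integral>\<^sup>+t. (\<integral>\<^sup>+s. ennreal (cdf mu s ^ i * (if s < t then cdf mu t - cdf mu s else 0)) \<partial>lborel)
              * ennreal (cdf mu t ^ (j - Suc i) * (1 - cdf mu t)) \<partial>lborel)"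
  proof (intro nn_integral_cong)
    fix t
    have "0 \<le> cdf mu s ^ i * (if s < t then cdf mu t - cdf mu s else 0)"
      "0 \<le> cdf mu t ^ (j - Suc i) * (1 - cdf mu t)" for s
      using mu.cdf_nondecreasing[of s t] mu.cdf_nonneg mu.cdf_bounded_prob by auto
    then have "(\<integral>\<^sup>+s. \<integral>\<^sup>+w. spacing_indicator X i w s * spacing_indicator X j w t \<partial>M \<partial>lborel)
      = (\<integral>\<^sup>+s. ennreal (cdf mu s ^ i * (if s < t then cdf mu t - cdf mu s else 0))
              * ennreal (cdf mu t ^ (j - Suc i) * (1 - cdf mu t)) \<partial>lborel)"
      by (simp add: nn_integral_spacing_indicator_mult[OF assms] ennreal_mult)
    also have "\<dots> = (\<integral>\<^sup>+s. ennreal (cdf mu s ^ i * (if s < t then cdf mu t - cdf mu s else 0)) \<partial>lborel)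
              * ennreal (cdf mu t ^ (j - Suc i) * (1 - cdf mu t))"
      by (rule nn_integral_multc) measurable
    finally show "(\<integral>\<^sup>+s. \<integral>\<^sup>+w. spacing_indicator X i w s * spacing_indicator X j w t \<partial>M \<partial>lborel) = \<dots>" .
  qed
  finally show ?thesis .
qed

end

section \<open>Log-concave distribution functions\<close>

(* The function h of the header, indexed by m = i - 1. *)
definition spacing_kernel :: "nat \<Rightarrow> real \<Rightarrow> real" where
  "spacing_kernel m v = (if v < 1 then v ^ Suc m * (1 - v) else 0)"

definition spacing_kernel_density :: "nat \<Rightarrow> real \<Rightarrow> real \<Rightarrow> real \<Rightarrow> ennreal" where
  "spacing_kernel_density m x y v =
     ennreal (if 0 < x \<and> x \<le> v \<and> v < y \<and> y < 1 then real (Suc m) * x ^ m else 0)"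

lemma spacing_kernel_nonneg: "0 \<le> v \<Longrightarrow> 0 \<le> spacing_kernel m v"
  by (simp add: spacing_kernel_def)

lemma borel_measurable_spacing_kernel[measurable]:
  assumes [measurable]: "f \<in> borel_measurable M"
  shows "(\<lambda>z. spacing_kernel m (f z)) \<in> borel_measurable M"
  unfolding spacing_kernel_def by measurable

lemma borel_measurable_spacing_kernel_density[measurable]:
  assumes [measurable]: "f \<in> borel_measurable M" "g \<in> borel_measurable M" "w \<in> borel_measurable M"
  shows "(\<lambda>z. spacing_kernel_density m (f z) (g z) (w z)) \<in> borel_measurable M"
  unfolding spacing_kernel_density_def by measurable

lemma nn_integral_power_density:
  assumes "0 \<le> v"
  shows "(\<integral>\<^sup>+x. ennreal (if 0 < x \<and> x \<le> v then real (Suc m) * x ^ m else 0) \<partial>lborel)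
    = ennreal (v ^ Suc m)"
proof -
  have "((\<lambda>x. real (Suc m) * x ^ m) has_integral v ^ Suc m - 0 ^ Suc m) {0..v}"
  proof (rule fundamental_theorem_of_calculus)
    fix x :: real
    show "((\<lambda>x. x ^ Suc m) has_vector_derivative real (Suc m) * x ^ m) (at x within {0..v})"
      using DERIV_pow[of "Suc m" x]
      by (simp add: has_real_derivative_iff_has_vector_derivative[symmetric] has_field_derivative_at_within)
  qed (use assms in simp)
  then have "(\<integral>\<^sup>+x. ennreal (real (Suc m) * x ^ m) * indicator {0..v} x \<partial>lborel) = ennreal (v ^ Suc m)"
    by (subst nn_integral_has_integral_lebesgue') auto
  moreover have "AE x in lborel. ennreal (if 0 < x \<and> x \<le> v then real (Suc m) * x ^ m else 0)
      = ennreal (real (Suc m) * x ^ m) * indicator {0..v} x"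
    using AE_lborel_singleton[of 0] by eventually_elim (auto simp: indicator_def)
  ultimately show ?thesis by (simp add: nn_integral_cong_AE)
qed

lemma nn_integral_spacing_kernel_density:
  assumes "0 \<le> v"
  shows "(\<integral>\<^sup>+x. \<integral>\<^sup>+y. spacing_kernel_density m x y v \<partial>lborel \<partial>lborel) = ennreal (spacing_kernel m v)"
proof -
  have "(\<integral>\<^sup>+y. spacing_kernel_density m x y v \<partial>lborel)
      = ennreal (if 0 < x \<and> x \<le> v then real (Suc m) * x ^ m else 0) * emeasure lborel {v<..<1}" for x
  proof -
    have "(\<integral>\<^sup>+y. spacing_kernel_density m x y v \<partial>lborel)
        = (\<integral>\<^sup>+y. ennreal (if 0 < x \<and> x \<le> v then real (Suc m) * x ^ m else 0) * indicator {v<..<1} y \<partial>lborel)"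
      by (intro nn_integral_cong) (auto simp: spacing_kernel_density_def indicator_def)
    also have "\<dots> = ennreal (if 0 < x \<and> x \<le> v then real (Suc m) * x ^ m else 0) * emeasure lborel {v<..<1}"
      by (rule nn_integral_cmult_indicator) simp
    finally show ?thesis .
  qed
  then have "(\<integral>\<^sup>+x. \<integral>\<^sup>+y. spacing_kernel_density m x y v \<partial>lborel \<partial>lborel)
      = ennreal (v ^ Suc m) * emeasure lborel {v<..<1}"
    using assms by (simp add: nn_integral_multc nn_integral_power_density)
  also have "\<dots> = ennreal (spacing_kernel m v)"
    using assms by (cases "v < 1") (simp_all add: spacing_kernel_def ennreal_mult[symmetric])
  finally show ?thesis .
qed

locale log_concave_cdf = real_distribution M for M :: "real measure" +
  fixes F :: "real \<Rightarrow> real"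
  assumes F_eq_cdf: "F = cdf M"
    and log_concave: "concave_on {x. 0 < F x \<and> F x < 1} (\<lambda>x. ln (F x))"
    and no_atom_at_right_endpoint: "(\<exists>x. F x = 1) \<Longrightarrow> measure M {right_endpoint F} = 0"
begin

lemma F_mono: "x \<le> y \<Longrightarrow> F x \<le> F y"
  unfolding F_eq_cdf by (rule cdf_nondecreasing)

lemma mono_F: "mono F"
  by (simp add: mono_def F_mono)

lemma F_nonneg: "0 \<le> F x"
  unfolding F_eq_cdf by (rule cdf_nonneg)

lemma F_le_1: "F x \<le> 1"
  unfolding F_eq_cdf by (rule cdf_bounded_prob)

lemma F_diff: "x < y \<Longrightarrow> F y - F x = measure M {x<..y}"
  unfolding F_eq_cdf by (rule cdf_diff_eq)

lemma borel_measurable_F[measurable]: "F \<in> borel_measurable borel"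
  using mono_F by (rule borel_measurable_mono)

lemma F_right_cont: "continuous (at_right a) F"
  unfolding F_eq_cdf by (rule cdf_is_right_cont)

lemma isCont_F_iff: "isCont F x \<longleftrightarrow> measure M {x} = 0"
  unfolding F_eq_cdf by (rule isCont_cdf)

lemma F_below_level: "0 < e \<Longrightarrow> \<exists>b. F b < e"
  using order_tendstoD(2)[OF cdf_lim_at_bot[folded F_eq_cdf]]
  by (auto simp: eventually_at_bot_linorder)

lemma F_above_level:
  assumes "e < 1"
  shows "\<exists>R\<ge>R0. e < F R"
proof -
  obtain N where "\<And>n. N \<le> n \<Longrightarrow> e < F n"
    using order_tendstoD(1)[OF cdf_lim_at_top_prob[folded F_eq_cdf] assms]
    by (auto simp: eventually_at_top_linorder)
  then show ?thesis by (intro exI[of _ "max R0 N"]) auto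
qed

lemma F_less_right:
  assumes "F u < v"
  obtains b where "u < b" "F b < v"
proof -
  have "eventually (\<lambda>z. F z < v) (at_right u)"
    using F_right_cont[of u] assms by (auto simp: continuous_within intro: order_tendstoD)
  moreover have "eventually (\<lambda>z. u < z) (at_right u)"
    by (rule eventually_at_right_less)
  ultimately show ?thesis
    using eventually_happens'[OF trivial_limit_at_right_real] that
    by (metis (mono_tags, lifting) eventually_conj)
qed

lemma bdd_below_F_eq_1: "bdd_below {x. F x = 1}"
proof -
  obtain b where "F b < 1" using F_below_level[of 1] by auto
  then have "b \<le> x" if "F x = 1" for x
    using that F_mono[of x b] by (cases "x \<le> b") auto
  then show ?thesis by (auto simp: bdd_below_def)
qed

lemma right_endpoint_le: "F x = 1 \<Longrightarrow> right_endpoint F \<le> x"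
  unfolding right_endpoint_def using bdd_below_F_eq_1 by (intro cInf_lower) auto

lemma F_less_1_below_right_endpoint: "x < right_endpoint F \<Longrightarrow> F x < 1"
  using right_endpoint_le[of x] F_le_1[of x] by (cases "F x = 1") auto

lemma F_right_endpoint:
  assumes "F u = 1"
  shows "F (right_endpoint F) = 1"
proof -
  have "F (right_endpoint F) = (INF x\<in>{x. F x = 1}. F x)"
    unfolding right_endpoint_def
    using mono_F F_right_cont bdd_below_F_eq_1 assms by (intro continuous_at_Inf_mono) auto
  also have "\<dots> = (INF x\<in>{x. F x = 1}. 1)"
    by (rule INF_cong) auto
  also have "\<dots> = 1"
    using assms by (intro cINF_const) auto
  finally show ?thesis .
qed

lemma isCont_F_interior:
  assumes "u' < u" "0 < F u'" "F u < 1"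
  shows "isCont F u"
proof -
  obtain b where b: "u < b" "F b < 1" using F_less_right[OF assms(3)] .
  define I where "I = {u'<..<b}"
  have I_sub: "I \<subseteq> {x. 0 < F x \<and> F x < 1}"
  proof
    fix z assume "z \<in> I"
    then show "z \<in> {x. 0 < F x \<and> F x < 1}"
      using assms b F_mono[of u' z] F_mono[of z b] by (auto simp: I_def)
  qed
  have u_in: "u \<in> I" using assms b by (simp add: I_def)
  have "concave_on I (\<lambda>x. ln (F x))"
    using log_concave I_sub convex_real_interval(8)[of u' b]
    unfolding concave_on_def I_def by (rule convex_on_subset)
  then have "continuous_on I (\<lambda>x. - ln (F x))"
    by (intro convex_on_continuous) (simp_all add: concave_on_def I_def)
  then have "isCont (\<lambda>x. - ln (F x)) u"
    using u_in by (simp add: continuous_on_eq_continuous_at I_def)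
  then have "isCont (\<lambda>x. exp (- (- ln (F x)))) u"
    by (rule isCont_o2) (intro continuous_intros)
  moreover have "eventually (\<lambda>x. x \<in> I) (nhds u)"
    using u_in by (intro eventually_nhds_in_open) (simp_all add: I_def)
  then have "eventually (\<lambda>x. F x = exp (- (- ln (F x)))) (nhds u)"
    by eventually_elim (use I_sub in auto)
  ultimately show ?thesis by (simp add: isCont_cong)
qed

lemma isCont_F_at_level_1:
  assumes "F u = 1"
  shows "isCont F u"
proof -
  have "measure M {u} = 0"
  proof (cases "right_endpoint F < u")
    case True
    have "measure M {u} \<le> measure M {right_endpoint F<..u}"
      using True by (intro finite_measure_mono) auto
    also have "\<dots> = 0"
      using F_diff[OF True] F_right_endpoint[OF assms] assms by simp
    finally show ?thesis using measure_nonneg[of M "{u}"] by linarith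
  next
    case False
    then have "right_endpoint F = u" using right_endpoint_le[OF assms] by simp
    then show ?thesis using no_atom_at_right_endpoint assms by auto
  qed
  then show ?thesis by (simp add: isCont_F_iff)
qed

lemma isCont_F:
  assumes "u' < u" "0 < F u'"
  shows "isCont F u"
  using isCont_F_interior[OF assms] isCont_F_at_level_1 F_le_1[of u] by fastforce

(* That is, the quotient F (s + h) / F s is nonincreasing in s. *)

lemma F_mult_shift_le_interior:
  assumes "a \<le> b" "0 \<le> h" "0 < F a" "F (b + h) < 1"
  shows "F a * F (b + h) \<le> F b * F (a + h)"
proof (cases "a = b \<or> h = 0")
  case True
  then show ?thesis by (auto simp: mult.commute)
next
  case False
  then have ab: "a < b" and h: "0 < h" using assms by auto
  define J where "J = {x. 0 < F x \<and> F x < 1}"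
  have in_J: "z \<in> J" if "a \<le> z" "z \<le> b + h" for z
    using F_mono[OF that(1)] F_mono[OF that(2)] assms by (auto simp: J_def)
  define l where "l = h / (b + h - a)"
  have l: "0 < l" "l < 1" "l * (b + h - a) = h"
    using ab h by (auto simp: l_def field_simps)
  have ln_concave: "(1 - t) * ln (F a) + t * ln (F (b + h)) \<le> ln (F ((1 - t) * a + t * (b + h)))"
    if "0 \<le> t" "t \<le> 1" for t
    using concave_onD[OF _ that in_J[of a] in_J[of "b + h"]] log_concave ab h
    by (simp add: J_def)
  have "(1 - (1 - l)) * a + (1 - l) * (b + h) = b" "(1 - l) * a + l * (b + h) = a + h"
    using l(3) by (simp_all add: algebra_simps)
  then have "l * ln (F a) + (1 - l) * ln (F (b + h)) \<le> ln (F b)"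
    and "(1 - l) * ln (F a) + l * ln (F (b + h)) \<le> ln (F (a + h))"
    using ln_concave[of "1 - l"] ln_concave[of l] l by simp_all
  moreover have "ln (F a) + ln (F (b + h))
      = (l * ln (F a) + (1 - l) * ln (F (b + h))) + ((1 - l) * ln (F a) + l * ln (F (b + h)))"
    by (simp add: algebra_simps)
  ultimately have "ln (F a) + ln (F (b + h)) \<le> ln (F b) + ln (F (a + h))"
    by linarith
  moreover have "0 < F b" "0 < F (a + h)" "0 < F (b + h)"
    using in_J[of b] in_J[of "a + h"] in_J[of "b + h"] ab h by (auto simp: J_def)
  ultimately have "ln (F a * F (b + h)) \<le> ln (F b * F (a + h))"
    using assms(3) by (simp add: ln_mult)
  then show ?thesis
    using \<open>0 < F b\<close> \<open>0 < F (a + h)\<close> \<open>0 < F (b + h)\<close> assms(3) by simp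
qed

lemma F_mult_shift_le_right_endpoint:
  assumes "a \<le> b" "0 \<le> h" "0 < F a" "F b < 1" "F (b + h) = 1"
  shows "F a * F (b + h) \<le> F b * F (a + h)"
proof -
  define w where "w = right_endpoint F"
  have Fw: "F w = 1" using F_right_endpoint[OF assms(5)] by (simp add: w_def)
  have "b < w" using assms(4) Fw F_mono[of w b] by (cases "w \<le> b") auto
  have "w \<le> b + h" using right_endpoint_le[OF assms(5)] by (simp add: w_def)
  have "(F \<longlongrightarrow> 1) (at_left w)"
    using isCont_F[of a w] assms \<open>b < w\<close> Fw by (simp add: isCont_def filterlim_at_split)
  moreover have "eventually (\<lambda>z. b < z \<and> z < w) (at_left w)"
    using \<open>b < w\<close> by (auto simp: eventually_at_left_field intro: exI[of _ b])
  then have "eventually (\<lambda>z. F a * F z \<le> F b * F (a + h)) (at_left w)"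
  proof eventually_elim
    case (elim z)
    have "F a * F (b + (z - b)) \<le> F b * F (a + (z - b))"
      using elim F_less_1_below_right_endpoint[of z] assms
      by (intro F_mult_shift_le_interior) (auto simp: w_def)
    also have "\<dots> \<le> F b * F (a + h)"
      using elim \<open>w \<le> b + h\<close> F_nonneg[of b] by (intro mult_left_mono F_mono) auto
    finally show ?case by simp
  qed
  ultimately have "F a * 1 \<le> F b * F (a + h)"
    by (intro tendsto_le[OF _ tendsto_const tendsto_mult[OF tendsto_const]]) simp_all
  then show ?thesis using assms(5) by simp
qed

lemma F_mult_shift_le:
  assumes "a \<le> b" "0 \<le> h" "0 < F a"
  shows "F a * F (b + h) \<le> F b * F (a + h)"
proof -
  consider "F (b + h) < 1" | "F b = 1" | "F b < 1" "F (b + h) = 1"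
    using F_le_1[of b] F_le_1[of "b + h"] by fastforce
  then show ?thesis
  proof cases
    case 1
    then show ?thesis using F_mult_shift_le_interior assms by blast
  next
    case 2
    have "F a * F (b + h) \<le> F a" using F_le_1 assms(3) by (simp add: mult_left_le)
    also have "\<dots> \<le> F (a + h)" using assms(2) by (intro F_mono) simp
    finally show ?thesis using 2 by simp
  next
    case 3
    then show ?thesis using F_mult_shift_le_right_endpoint assms by blast
  qed
qed

lemma F_attains_level:
  assumes "0 < F s" "F s \<le> v" "v < 1"
  obtains h where "0 \<le> h" "F (s + h) = v"
proof (cases "F s = v")
  case True
  then show ?thesis using that[of 0] by simp
next
  case False
  then obtain s' where s': "s < s'" "F s' < v"
    using F_less_right[of s v] assms(2) by auto
  obtain R where R: "s' \<le> R" "v < F R"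
    using F_above_level[OF assms(3)] by blast
  have "continuous_on {s'..R} F"
    using s' assms(1) by (intro continuous_at_imp_continuous_on ballI isCont_F[of s]) auto
  then obtain z where "s' \<le> z" "F z = v"
    using IVT'[of F s' v R] s' R by auto
  then show ?thesis using that[of "z - s"] s' by simp
qed

lemma emeasure_scaled_level_set_from_le:
  assumes c: "0 < c" "c \<le> 1" and xy: "0 < x" "y < 1"
    and s1: "c * x \<le> F s1" "F s1 < c * y"
  shows "emeasure lborel ({s. c * x \<le> F s \<and> F s < c * y} \<inter> {s1..})
          \<le> emeasure lborel {s. x \<le> F s \<and> F s < y}"
proof -
  define v where "v = F s1 / c"
  have Fs1: "0 < F s1" using mult_pos_pos[OF c(1) xy(1)] s1(1) by linarith
  have "F s1 \<le> v" using c Fs1 by (simp add: v_def field_simps mult_left_le)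
  have "x \<le> v" "v < y" using s1 c by (auto simp: v_def field_simps)
  with xy obtain h where h: "0 \<le> h" "F (s1 + h) = v"
    using F_attains_level[OF Fs1 \<open>F s1 \<le> v\<close>] by auto
  have shifted: "s + h \<in> {s. x \<le> F s \<and> F s < y}"
    if "s1 \<le> s" "F s < c * y" for s
  proof -
    have "F s1 * F (s + h) \<le> F s * F (s1 + h)" using F_mult_shift_le[OF that(1) h(1) Fs1] .
    also have "\<dots> = F s1 * (F s / c)" using h c by (simp add: v_def)
    finally have "F (s + h) \<le> F s / c" using Fs1 by (rule mult_left_le_imp_le)
    also have "\<dots> < y" using that c by (simp add: field_simps mult.commute)
    moreover have "x \<le> F (s + h)"
      using \<open>x \<le> v\<close> h F_mono[of "s1 + h" "s + h"] that by simp
    ultimately show ?thesis by simp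
  qed
  have meas: "{s. x \<le> F s \<and> F s < y} \<in> sets borel" by measurable
  have "emeasure lborel ({s. c * x \<le> F s \<and> F s < c * y} \<inter> {s1..})
      \<le> emeasure lborel ((+) h -` {s. x \<le> F s \<and> F s < y} \<inter> space lborel)"
    using shifted meas by (intro emeasure_mono) (auto simp: add.commute)
  also have "\<dots> = emeasure (distr lborel borel ((+) h)) {s. x \<le> F s \<and> F s < y}"
    using meas by (subst emeasure_distr) auto
  also have "\<dots> = emeasure lborel {s. x \<le> F s \<and> F s < y}"
    by (simp add: lborel_distr_plus)
  finally show ?thesis .
qed

lemma emeasure_scaled_level_set_le:
  assumes c: "0 < c" "c \<le> 1" and xy: "0 < x" "y < 1"
  shows "emeasure lborel {s. c * x \<le> F s \<and> F s < c * y}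
          \<le> emeasure lborel {s. x \<le> F s \<and> F s < y}"
    (is "emeasure lborel ?S \<le> emeasure lborel ?T")
proof (cases "?S = {}")
  case True
  then show ?thesis by (metis emeasure_empty zero_le)
next
  case False
  obtain b where b: "F b < c * x" using F_below_level mult_pos_pos[OF c(1) xy(1)] by blast
  have "b \<le> s" if "s \<in> ?S" for s
    using that b F_mono[of s b] by (cases "s \<le> b") auto
  then have "bdd_below ?S" by (auto simp: bdd_below_def)
  have meas: "?S \<in> sets borel" by measurable
  show ?thesis
  proof (rule ennreal_le_epsilon)
    fix e :: real assume "0 < e"
    then obtain s1 where s1: "s1 \<in> ?S" "s1 < Inf ?S + e"
      using cInf_lessD[OF False, of "Inf ?S + e"] by auto
    have "Inf ?S \<le> s1" using s1 \<open>bdd_below ?S\<close> by (intro cInf_lower)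
    have "?S \<subseteq> {Inf ?S..<s1} \<union> (?S \<inter> {s1..})"
      using \<open>bdd_below ?S\<close> by (auto intro: cInf_lower)
    then have "emeasure lborel ?S \<le> emeasure lborel ({Inf ?S..<s1} \<union> (?S \<inter> {s1..}))"
      using meas by (intro emeasure_mono) auto
    also have "\<dots> \<le> emeasure lborel {Inf ?S..<s1} + emeasure lborel (?S \<inter> {s1..})"
      using meas by (intro emeasure_subadditive) auto
    also have "emeasure lborel {Inf ?S..<s1} \<le> ennreal e"
      using \<open>Inf ?S \<le> s1\<close> s1 by (simp add: ennreal_leI)
    also have "emeasure lborel (?S \<inter> {s1..}) \<le> emeasure lborel ?T"
      using s1 by (intro emeasure_scaled_level_set_from_le c xy) auto
    finally show "emeasure lborel ?S \<le> emeasure lborel ?T + ennreal e"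
      by (simp add: add.commute add_mono)
  qed
qed

lemma nn_integral_spacing_kernel_scaled:
  assumes "0 < c"
  shows "(\<integral>\<^sup>+s. ennreal (spacing_kernel m (F s / c)) \<partial>lborel)
       = (\<integral>\<^sup>+x. \<integral>\<^sup>+y. (if 0 < x \<and> y < 1 then ennreal (real (Suc m) * x ^ m) else 0)
              * emeasure lborel {s. x \<le> F s / c \<and> F s / c < y} \<partial>lborel \<partial>lborel)"
proof -
  have "(\<integral>\<^sup>+s. ennreal (spacing_kernel m (F s / c)) \<partial>lborel)
      = (\<integral>\<^sup>+s. \<integral>\<^sup>+x. \<integral>\<^sup>+y. spacing_kernel_density m x y (F s / c) \<partial>lborel \<partial>lborel \<partial>lborel)"
    using assms F_nonneg by (simp add: nn_integral_spacing_kernel_density)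
  also have "\<dots> = (\<integral>\<^sup>+x. \<integral>\<^sup>+s. \<integral>\<^sup>+y. spacing_kernel_density m x y (F s / c) \<partial>lborel \<partial>lborel \<partial>lborel)"
    by (rule lborel_pair.Fubini'[symmetric]) measurable
  also have "\<dots> = (\<integral>\<^sup>+x. \<integral>\<^sup>+y. \<integral>\<^sup>+s. spacing_kernel_density m x y (F s / c) \<partial>lborel \<partial>lborel \<partial>lborel)"
    by (intro nn_integral_cong lborel_pair.Fubini'[symmetric]) measurable
  also have "\<dots> = (\<integral>\<^sup>+x. \<integral>\<^sup>+y. (if 0 < x \<and> y < 1 then ennreal (real (Suc m) * x ^ m) else 0)
              * emeasure lborel {s. x \<le> F s / c \<and> F s / c < y} \<partial>lborel \<partial>lborel)"
  proof (intro nn_integral_cong)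
    fix x y
    have "(\<integral>\<^sup>+s. spacing_kernel_density m x y (F s / c) \<partial>lborel)
        = (\<integral>\<^sup>+s. (if 0 < x \<and> y < 1 then ennreal (real (Suc m) * x ^ m) else 0)
              * indicator {s. x \<le> F s / c \<and> F s / c < y} s \<partial>lborel)"
      by (intro nn_integral_cong) (auto simp: spacing_kernel_density_def indicator_def)
    also have "\<dots> = (if 0 < x \<and> y < 1 then ennreal (real (Suc m) * x ^ m) else 0)
              * emeasure lborel {s. x \<le> F s / c \<and> F s / c < y}"
      by (rule nn_integral_cmult_indicator) measurable
    finally show "(\<integral>\<^sup>+s. spacing_kernel_density m x y (F s / c) \<partial>lborel) = \<dots>" .
  qed
  finally show ?thesis .
qed

lemma nn_integral_spacing_kernel_scaled_le:
  assumes "0 < c" "c \<le> 1"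
  shows "(\<integral>\<^sup>+s. ennreal (spacing_kernel m (F s / c)) \<partial>lborel)
    \<le> (\<integral>\<^sup>+s. ennreal (spacing_kernel m (F s)) \<partial>lborel)"
proof -
  have "emeasure lborel {s. x \<le> F s / c \<and> F s / c < y} \<le> emeasure lborel {s. x \<le> F s / 1 \<and> F s / 1 < y}"
    if "0 < x" "y < 1" for x y
  proof -
    have "{s. x \<le> F s / c \<and> F s / c < y} = {s. c * x \<le> F s \<and> F s < c * y}"
      using assms by (auto simp: pos_le_divide_eq pos_divide_less_eq mult.commute)
    then show ?thesis
      using emeasure_scaled_level_set_le[OF assms that] by simp
  qed
  then have "(\<integral>\<^sup>+s. ennreal (spacing_kernel m (F s / c)) \<partial>lborel)
     \<le> (\<integral>\<^sup>+x. \<integral>\<^sup>+y. (if 0 < x \<and> y < 1 then ennreal (real (Suc m) * x ^ m) else 0)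
              * emeasure lborel {s. x \<le> F s / 1 \<and> F s / 1 < y} \<partial>lborel \<partial>lborel)"
    unfolding nn_integral_spacing_kernel_scaled[OF assms(1)]
    by (intro nn_integral_mono) (simp add: mult_left_mono)
  also have "\<dots> = (\<integral>\<^sup>+s. ennreal (spacing_kernel m (F s / 1)) \<partial>lborel)"
    by (rule nn_integral_spacing_kernel_scaled[symmetric]) simp
  finally show ?thesis by simp
qed

lemma F_power_increment_eq:
  assumes "0 < F t"
  shows "F s ^ Suc m * (if s < t then F t - F s else 0) = F t ^ Suc (Suc m) * spacing_kernel m (F s / F t)"
proof (cases "s < t")
  case True
  then have "F s \<le> F t" by (intro F_mono) simp
  then show ?thesis
    using assms True by (cases "F s < F t") (simp_all add: spacing_kernel_def field_simps power_divide)
next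
  case False
  then have "F t \<le> F s" by (intro F_mono) simp
  then show ?thesis using False assms by (simp add: spacing_kernel_def field_simps)
qed

lemma spacing_kernel_F: "spacing_kernel m (F s) = F s ^ Suc m * (1 - F s)"
  using F_le_1[of s] by (cases "F s < 1") (auto simp: spacing_kernel_def)

lemma nn_integral_F_power_increment_le:
  "(\<integral>\<^sup>+s. ennreal (F s ^ Suc m * (if s < t then F t - F s else 0)) \<partial>lborel)
    \<le> ennreal (F t ^ Suc (Suc m)) * (\<integral>\<^sup>+s. ennreal (F s ^ Suc m * (1 - F s)) \<partial>lborel)"
proof (cases "F t = 0")
  case True
  then have "F s ^ Suc m * (if s < t then F t - F s else 0) = 0" for s
    using F_mono[of s t] F_nonneg[of s] by auto
  then have "(\<lambda>s. ennreal (F s ^ Suc m * (if s < t then F t - F s else 0))) = (\<lambda>s. 0)"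
    by (simp only: ennreal_0)
  then show ?thesis by simp
next
  case False
  then have c: "0 < F t" "F t \<le> 1" using F_nonneg[of t] F_le_1[of t] by auto
  have "(\<integral>\<^sup>+s. ennreal (F s ^ Suc m * (if s < t then F t - F s else 0)) \<partial>lborel)
      = (\<integral>\<^sup>+s. ennreal (F t ^ Suc (Suc m)) * ennreal (spacing_kernel m (F s / F t)) \<partial>lborel)"
    unfolding F_power_increment_eq[OF c(1)]
    using c F_nonneg by (intro nn_integral_cong ennreal_mult spacing_kernel_nonneg) simp_all
  also have "\<dots> = ennreal (F t ^ Suc (Suc m)) * (\<integral>\<^sup>+s. ennreal (spacing_kernel m (F s / F t)) \<partial>lborel)"
    by (rule nn_integral_cmult) measurable
  also have "\<dots> \<le> ennreal (F t ^ Suc (Suc m)) * (\<integral>\<^sup>+s. ennreal (spacing_kernel m (F s)) \<partial>lborel)"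
    by (intro mult_left_mono nn_integral_spacing_kernel_scaled_le c) simp
  finally show ?thesis by (simp only: spacing_kernel_F)
qed

end

section \<open>Negative correlation of the spacings\<close>

locale log_concave_iid = iid_sequence M mu X + D: log_concave_cdf mu F
  for M :: "'a measure" and mu :: "real measure" and X :: "nat \<Rightarrow> 'a \<Rightarrow> real" and F :: "real \<Rightarrow> real"
begin

lemma nn_integral_pspacing_mult_le:
  assumes "1 \<le> i" "i < j"
  shows "(\<integral>\<^sup>+w. ennreal (pspacing X i w) * ennreal (pspacing X j w) \<partial>M)
     \<le> (\<integral>\<^sup>+w. ennreal (pspacing X i w) \<partial>M) * (\<integral>\<^sup>+w. ennreal (pspacing X j w) \<partial>M)"
proof -
  obtain m where m: "i = Suc m" using assms by (cases i) auto
  define E where "E = (\<integral>\<^sup>+s. ennreal (F s ^ i * (1 - F s)) \<partial>lborel)"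
  have "Suc i + (j - Suc i) = j" using assms by simp
  then have F_pow: "F t ^ Suc i * (F t ^ (j - Suc i) * (1 - F t)) = F t ^ j * (1 - F t)" for t
    by (metis mult.assoc power_add)
  have "(\<integral>\<^sup>+w. ennreal (pspacing X i w) * ennreal (pspacing X j w) \<partial>M)
     = (\<integral>\<^sup>+t. (\<integral>\<^sup>+s. ennreal (F s ^ i * (if s < t then F t - F s else 0)) \<partial>lborel)
              * ennreal (F t ^ (j - Suc i) * (1 - F t)) \<partial>lborel)"
    unfolding D.F_eq_cdf by (rule nn_integral_pspacing_mult[OF assms])
  also have "\<dots> \<le> (\<integral>\<^sup>+t. (ennreal (F t ^ Suc i) * E) * ennreal (F t ^ (j - Suc i) * (1 - F t)) \<partial>lborel)"
    using D.nn_integral_F_power_increment_le[of m]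
    by (intro nn_integral_mono mult_right_mono) (simp_all add: m E_def)
  also have "\<dots> = (\<integral>\<^sup>+t. E * ennreal (F t ^ j * (1 - F t)) \<partial>lborel)"
  proof (rule nn_integral_cong)
    fix t
    have "ennreal (F t ^ Suc i) * E * ennreal (F t ^ (j - Suc i) * (1 - F t))
        = E * (ennreal (F t ^ Suc i) * ennreal (F t ^ (j - Suc i) * (1 - F t)))"
      by (simp only: ac_simps)
    also have "\<dots> = E * ennreal (F t ^ j * (1 - F t))"
      unfolding F_pow[of t, symmetric] using D.F_nonneg[of t] D.F_le_1[of t]
      by (subst ennreal_mult) auto
    finally show "ennreal (F t ^ Suc i) * E * ennreal (F t ^ (j - Suc i) * (1 - F t)) = E * ennreal (F t ^ j * (1 - F t))" .
  qed
  also have "\<dots> = E * (\<integral>\<^sup>+t. ennreal (F t ^ j * (1 - F t)) \<partial>lborel)"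
    by (rule nn_integral_cmult) measurable
  also have "\<dots> = (\<integral>\<^sup>+w. ennreal (pspacing X i w) \<partial>M) * (\<integral>\<^sup>+w. ennreal (pspacing X j w) \<partial>M)"
    using assms by (simp add: E_def nn_integral_pspacing D.F_eq_cdf)
  finally show ?thesis .
qed

lemma covariance_pspacing_nonpos:
  assumes "1 \<le> i" "1 \<le> j" "i \<noteq> j" "integrable mu (\<lambda>x. x)"
  shows "covariance M (pspacing X i) (pspacing X j) \<le> 0"
proof -
  have less: "covariance M (pspacing X i) (pspacing X j) \<le> 0" if "1 \<le> i" "i < j" for i j
    using that assms(4) nn_integral_pspacing_mult_le[OF that]
    by (intro covariance_nonpos integrable_pspacing pspacing_nonneg) auto
  show ?thesis
  proof (cases "i < j")
    case True
    then show ?thesis using less assms by blast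
  next
    case False
    then have "covariance M (pspacing X j) (pspacing X i) \<le> 0" using less assms by simp
    then show ?thesis by (simp only: covariance_commute)
  qed
qed

end

theorem theorem4p2:
  fixes mu :: "real measure" and F :: "real \<Rightarrow> real"
    and M :: "'a measure" and X :: "nat \<Rightarrow> 'a \<Rightarrow> real"
  assumes dist: "real_distribution mu"
    and F_def: "F = cdf mu"
    and second_moment: "integrable mu (\<lambda>x. x ^ 2)"
    and logconcave: "concave_on {x. 0 < F x \<and> F x < 1} (\<lambda>x. ln (F x))"
    and no_atom: "(\<exists>x. F x = 1) \<Longrightarrow> measure mu {right_endpoint F} = 0"
    and probM: "prob_space M"
    and indep: "prob_space.indep_vars M (\<lambda>_. borel) X {1..}"
    and distr: "\<And>i. i \<ge> 1 \<Longrightarrow> distr M borel (X i) = mu"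
  shows "\<forall>n\<ge>2. \<forall>i\<in>{1..n-1}. \<forall>j\<in>{1..n-1}. i \<noteq> j \<longrightarrow>
           covariance M (pspacing X i) (pspacing X j) \<le> 0"
proof -
  interpret log_concave_iid M mu X F
  proof (intro log_concave_iid.intro iid_sequence.intro iid_sequence_axioms.intro
      log_concave_cdf.intro log_concave_cdf_axioms.intro)
    show "\<And>i. 1 \<le> i \<Longrightarrow> distr M borel (X i) = mu" by (rule distr)
  qed (fact assms)+
  have "integrable mu (\<lambda>x. x)"
    by (rule mu.square_integrable_imp_integrable) (use second_moment in auto)
  then show ?thesis
    using covariance_pspacing_nonpos by fastforce
qed

end
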